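(* Let $M=T^*\mathbb{T}^2=\{(\phi,\theta,s,t):\phi,\theta\in\mathbb{R}/\pi\mathbb{Z},\ s,t\in\mathbb{R}\}$, $Z=\{\phi=0\}$, and let $\omega_1=\frac{1}{\sin^2\phi}d\phi\wedge d\theta+ds\wedge dt$ and $\omega_2=\frac1{\sin^2\phi}d\phi\wedge ds+d\theta\wedge dt$. Then the symplectic manifolds $(M\setminus Z,\omega_1)$ and $(M\setminus Z,\omega_2)$ are symplectomorphic. *)

theory Defs
  imports "HOL-Analysis.Analysis"
begin

text \<open>Points of T*T^2 are lifted to the universal cover R^4 with coordinates
 (phi, theta, s, t); the actual manifold is the quotient by the lattice
 pi Z x pi Z x 0 x 0.\<close>

type_synonym pt = "real \<times> real \<times> real \<times> real"

definition same_pt :: "pt \<Rightarrow> pt \<Rightarrow> bool" where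
  "same_pt x y \<longleftrightarrow> (case x of (p, th, s, t) \<Rightarrow> case y of (p', th', s', t') \<Rightarrow>
      (\<exists>a b :: int. p' = p + of_int a * pi \<and> th' = th + of_int b * pi) \<and> s' = s \<and> t' = t)"

text \<open>Preimage of M minus Z, Z = {phi = 0}, in the cover.\<close>
definition MZ :: "pt set" where
  "MZ = {(p, th, s, t). sin p \<noteq> 0}"

fun Ck_on :: "nat \<Rightarrow> 'a::real_normed_vector set \<Rightarrow> ('a \<Rightarrow> 'b::real_normed_vector) \<Rightarrow> bool" where
  "Ck_on 0 U f \<longleftrightarrow> continuous_on U f"
| "Ck_on (Suc k) U f \<longleftrightarrow> f differentiable_on U \<and>
     (\<forall>v. Ck_on k U (\<lambda>x. frechet_derivative f (at x) v))"

definition smooth_on :: "'a::real_normed_vector set \<Rightarrow> ('a \<Rightarrow> 'b::real_normed_vector) \<Rightarrow> bool" where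
  "smooth_on U f \<longleftrightarrow> (\<forall>k. Ck_on k U f)"

definition omega1 :: "pt \<Rightarrow> pt \<Rightarrow> pt \<Rightarrow> real" where
  "omega1 x v w = (case x of (p, th, s, t) \<Rightarrow> case v of (vp, vth, vs, vt) \<Rightarrow>
      case w of (wp, wth, ws, wt) \<Rightarrow>
      (vp * wth - vth * wp) / (sin p)\<^sup>2 + (vs * wt - vt * ws))"

definition omega2 :: "pt \<Rightarrow> pt \<Rightarrow> pt \<Rightarrow> real" where
  "omega2 x v w = (case x of (p, th, s, t) \<Rightarrow> case v of (vp, vth, vs, vt) \<Rightarrow>
      case w of (wp, wth, ws, wt) \<Rightarrow>
      (vp * ws - vs * wp) / (sin p)\<^sup>2 + (vth * wt - vt * wth))"

text \<open>A symplectomorphism (M\Z, w) -> (M\Z, w'), given by lifts F, G of the map and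
 its inverse to the cover: both smooth, preserve M\Z, descend to the quotient,
 are mutually inverse on the quotient, and F pulls w' back to w.\<close>
definition symplectomorphic_MZ :: "(pt \<Rightarrow> pt \<Rightarrow> pt \<Rightarrow> real) \<Rightarrow> (pt \<Rightarrow> pt \<Rightarrow> pt \<Rightarrow> real) \<Rightarrow> bool" where
  "symplectomorphic_MZ w w' \<longleftrightarrow> (\<exists>F G :: pt \<Rightarrow> pt.
      smooth_on MZ F \<and> smooth_on MZ G \<and> F ` MZ \<subseteq> MZ \<and> G ` MZ \<subseteq> MZ \<and>
      (\<forall>x\<in>MZ. \<forall>y\<in>MZ. same_pt x y \<longrightarrow> same_pt (F x) (F y) \<and> same_pt (G x) (G y)) \<and>
      (\<forall>x\<in>MZ. same_pt (G (F x)) x \<and> same_pt (F (G x)) x) \<and>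
      (\<forall>x\<in>MZ. \<forall>v w0. w' (F x) (frechet_derivative F (at x) v) (frechet_derivative F (at x) w0)
                        = w x v w0))"

end

theory Submission
  imports Defs
begin

text \<open>The map (\<phi>, \<theta>, s, t) \<mapsto> (\<pi>/2 + arctan s, \<theta>, t, cot \<phi>) is the symplectomorphism.
  Since d(cot \<phi>) = - d\<phi> / sin^2 \<phi>, the term d\<theta> \<and> dt' of omega2 pulls back to
  d\<phi> \<and> d\<theta> / sin^2 \<phi>; and \<phi>' = \<pi>/2 + arctan s has 1 / sin^2 \<phi>' = 1 + s^2, the reciprocal of
  arctan' s, so d\<phi>' \<and> ds' / sin^2 \<phi>' pulls back to ds \<and> dt. Because cot is \<pi>-periodic and
  restricts to a diffeomorphism (0, \<pi>) \<rightarrow> \<real> with inverse \<sigma> \<mapsto> \<pi>/2 - arctan \<sigma>, the map descends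
  to M - Z and is inverted there by (\<phi>, \<theta>, s, t) \<mapsto> (\<pi>/2 - arctan t, \<theta>, - cot \<phi>, s).
  Smoothness follows because all components lie in an algebra of functions closed under
  differentiation.\<close>

lemma Ck_on_cong:
  assumes "open U" "\<And>x. x \<in> U \<Longrightarrow> f x = g x" "Ck_on k U f"
  shows "Ck_on k U g"
  using assms(2,3)
proof (induction k arbitrary: f g)
  case 0
  then show ?case using continuous_on_cong by force
next
  case (Suc k)
  have f': "(f has_derivative frechet_derivative f (at x)) (at x)" if "x \<in> U" for x
    using Suc.prems(2) that \<open>open U\<close>
    by (simp add: differentiable_on_eq_differentiable_at frechet_derivative_works)
  have g': "(g has_derivative frechet_derivative f (at x)) (at x)" if "x \<in> U" for x
    using has_derivative_transform_within_open[OF f'[OF that] \<open>open U\<close> that] Suc.prems(1)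
    by blast
  then have "frechet_derivative g (at x) = frechet_derivative f (at x)" if "x \<in> U" for x
    using frechet_derivative_at that by metis
  moreover have "g differentiable_on U"
    using g' \<open>open U\<close> differentiable_on_eq_differentiable_at differentiable_def by blast
  ultimately show ?case
    using Suc.prems(2)
      Suc.IH[of "\<lambda>x. frechet_derivative f (at x) v" "\<lambda>x. frechet_derivative g (at x) v" for v]
    by simp
qed

lemma Ck_on_Pair:
  assumes "open U" "Ck_on k U f" "Ck_on k U g"
  shows "Ck_on k U (\<lambda>x. (f x, g x))"
  using assms(2,3)
proof (induction k arbitrary: f g)
  case 0
  then show ?case by (simp add: continuous_on_Pair)
next
  case (Suc k)
  have f': "(f has_derivative frechet_derivative f (at x)) (at x)"
   and g': "(g has_derivative frechet_derivative g (at x)) (at x)" if "x \<in> U" for x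
    using Suc.prems that \<open>open U\<close>
    by (simp_all add: differentiable_on_eq_differentiable_at frechet_derivative_works)
  have fg': "((\<lambda>x. (f x, g x)) has_derivative
      (\<lambda>v. (frechet_derivative f (at x) v, frechet_derivative g (at x) v))) (at x)"
    if "x \<in> U" for x
    using has_derivative_Pair[OF f'[OF that] g'[OF that]] .
  have "(\<lambda>x. (f x, g x)) differentiable_on U"
    using fg' \<open>open U\<close> differentiable_on_eq_differentiable_at differentiable_def by blast
  moreover have "Ck_on k U (\<lambda>x. frechet_derivative (\<lambda>x. (f x, g x)) (at x) v)" for v
  proof (rule Ck_on_cong[OF \<open>open U\<close>])
    show "Ck_on k U (\<lambda>x. (frechet_derivative f (at x) v, frechet_derivative g (at x) v))"
      using Suc.IH Suc.prems by simp
    show "(frechet_derivative f (at x) v, frechet_derivative g (at x) v)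
        = frechet_derivative (\<lambda>x. (f x, g x)) (at x) v" if "x \<in> U" for x
      by (metis frechet_derivative_at[OF fg'[OF that]])
  qed
  ultimately show ?case by simp
qed

lemma smooth_on_derivative_closed:
  assumes "open U"
    and closed: "\<And>f. f \<in> S \<Longrightarrow>
      \<exists>Df. (\<forall>x\<in>U. (f has_derivative (\<lambda>v. Df v x)) (at x)) \<and> (\<forall>v. Df v \<in> S)"
    and "f \<in> S"
  shows "smooth_on U f"
proof -
  have "\<forall>f\<in>S. Ck_on k U f" for k
  proof (induction k)
    case 0
    show ?case
      using closed by (meson Ck_on.simps(1) continuous_at_imp_continuous_on has_derivative_continuous)
  next
    case (Suc k)
    show ?case
    proof
      fix f assume "f \<in> S"
      then obtain Df where Df: "\<And>x. x \<in> U \<Longrightarrow> (f has_derivative (\<lambda>v. Df v x)) (at x)"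
        and "\<And>v. Df v \<in> S"
        using closed by blast
      have "f differentiable_on U"
        using Df \<open>open U\<close> differentiable_on_eq_differentiable_at differentiable_def by blast
      moreover have "Ck_on k U (\<lambda>x. frechet_derivative f (at x) v)" for v
      proof (rule Ck_on_cong[OF \<open>open U\<close>])
        show "Ck_on k U (Df v)" using Suc.IH \<open>Df v \<in> S\<close> by blast
        show "Df v x = frechet_derivative f (at x) v" if "x \<in> U" for x
          by (metis Df[OF that] frechet_derivative_at)
      qed
      ultimately show "Ck_on (Suc k) U f" by simp
    qed
  qed
  then show ?thesis
    using \<open>f \<in> S\<close> unfolding smooth_on_def by blast
qed

lemma smooth_on_Pair:
  "open U \<Longrightarrow> smooth_on U f \<Longrightarrow> smooth_on U g \<Longrightarrow> smooth_on U (\<lambda>x. (f x, g x))"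
  unfolding smooth_on_def by (simp add: Ck_on_Pair)

inductive_set elementary_MZ :: "(pt \<Rightarrow> real) set" where
  const: "(\<lambda>x. c) \<in> elementary_MZ"
| coord1: "(\<lambda>x. fst x) \<in> elementary_MZ"
| coord2: "(\<lambda>x. fst (snd x)) \<in> elementary_MZ"
| coord3: "(\<lambda>x. fst (snd (snd x))) \<in> elementary_MZ"
| coord4: "(\<lambda>x. snd (snd (snd x))) \<in> elementary_MZ"
| sin: "(\<lambda>x. sin (fst x)) \<in> elementary_MZ"
| cos: "(\<lambda>x. cos (fst x)) \<in> elementary_MZ"
| inverse_sin: "(\<lambda>x. inverse (sin (fst x))) \<in> elementary_MZ"
| arctan3: "(\<lambda>x. arctan (fst (snd (snd x)))) \<in> elementary_MZ"
| arctan4: "(\<lambda>x. arctan (snd (snd (snd x)))) \<in> elementary_MZ"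
| inverse3: "(\<lambda>x. inverse (1 + (fst (snd (snd x)))\<^sup>2)) \<in> elementary_MZ"
| inverse4: "(\<lambda>x. inverse (1 + (snd (snd (snd x)))\<^sup>2)) \<in> elementary_MZ"
| add: "f \<in> elementary_MZ \<Longrightarrow> g \<in> elementary_MZ \<Longrightarrow> (\<lambda>x. f x + g x) \<in> elementary_MZ"
| mult: "f \<in> elementary_MZ \<Longrightarrow> g \<in> elementary_MZ \<Longrightarrow> (\<lambda>x. f x * g x) \<in> elementary_MZ"

lemma open_MZ: "open MZ"
proof -
  have "open {x::pt. sin (fst x) \<noteq> 0}"
    by (intro open_Collect_neq continuous_intros)
  moreover have "MZ = {x. sin (fst x) \<noteq> 0}"
    unfolding MZ_def by auto
  ultimately show ?thesis by simp
qed

lemma one_plus_square_neq_0: "1 + y * y \<noteq> (0::real)"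
  using zero_le_square[of y] by linarith

lemma elementary_MZ_has_derivative:
  assumes "f \<in> elementary_MZ"
  shows "\<exists>Df. (\<forall>x\<in>MZ. (f has_derivative (\<lambda>v. Df v x)) (at x)) \<and> (\<forall>v. Df v \<in> elementary_MZ)"
  using assms
proof induction
  case const
  show ?case
    by (intro exI[of _ "\<lambda>v x. 0"] conjI ballI allI elementary_MZ.intros) auto
next
  case coord1
  show ?case
    by (intro exI[of _ "\<lambda>v x. fst v"] conjI ballI allI elementary_MZ.intros)
      (auto intro!: derivative_eq_intros)
next
  case coord2
  show ?case
    by (intro exI[of _ "\<lambda>v x. fst (snd v)"] conjI ballI allI elementary_MZ.intros)
      (auto intro!: derivative_eq_intros)
next
  case coord3
  show ?case
    by (intro exI[of _ "\<lambda>v x. fst (snd (snd v))"] conjI ballI allI elementary_MZ.intros)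
      (auto intro!: derivative_eq_intros)
next
  case coord4
  show ?case
    by (intro exI[of _ "\<lambda>v x. snd (snd (snd v))"] conjI ballI allI elementary_MZ.intros)
      (auto intro!: derivative_eq_intros)
next
  case sin
  show ?case
    by (intro exI[of _ "\<lambda>v x. fst v * cos (fst x)"] conjI ballI allI elementary_MZ.intros)
      (auto intro!: derivative_eq_intros)
next
  case cos
  show ?case
    by (intro exI[of _ "\<lambda>v x. - fst v * sin (fst x)"] conjI ballI allI elementary_MZ.intros)
      (auto intro!: derivative_eq_intros)
next
  case inverse_sin
  show ?case
    by (intro exI[of _ "\<lambda>v x. - fst v * cos (fst x) * inverse (sin (fst x)) * inverse (sin (fst x))"]
        conjI ballI allI elementary_MZ.intros)
      (auto intro!: derivative_eq_intros simp: MZ_def field_simps power2_eq_square)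
next
  case arctan3
  show ?case
    by (intro exI[of _ "\<lambda>v x. fst (snd (snd v)) * inverse (1 + (fst (snd (snd x)))\<^sup>2)"]
        conjI ballI allI elementary_MZ.intros)
      (auto intro!: derivative_eq_intros simp: field_simps)
next
  case arctan4
  show ?case
    by (intro exI[of _ "\<lambda>v x. snd (snd (snd v)) * inverse (1 + (snd (snd (snd x)))\<^sup>2)"]
        conjI ballI allI elementary_MZ.intros)
      (auto intro!: derivative_eq_intros simp: field_simps)
next
  case inverse3
  show ?case
    by (intro exI[of _ "\<lambda>v x. - 2 * fst (snd (snd v)) * fst (snd (snd x))
        * inverse (1 + (fst (snd (snd x)))\<^sup>2) * inverse (1 + (fst (snd (snd x)))\<^sup>2)"]
        conjI ballI allI elementary_MZ.intros)
      (auto intro!: derivative_eq_intros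
        simp: field_simps power2_eq_square one_plus_square_neq_0)
next
  case inverse4
  show ?case
    by (intro exI[of _ "\<lambda>v x. - 2 * snd (snd (snd v)) * snd (snd (snd x))
        * inverse (1 + (snd (snd (snd x)))\<^sup>2) * inverse (1 + (snd (snd (snd x)))\<^sup>2)"]
        conjI ballI allI elementary_MZ.intros)
      (auto intro!: derivative_eq_intros
        simp: field_simps power2_eq_square one_plus_square_neq_0)
next
  case (add f g)
  then obtain Df Dg where
    "\<forall>x\<in>MZ. (f has_derivative (\<lambda>v. Df v x)) (at x)" "\<forall>v. Df v \<in> elementary_MZ"
    "\<forall>x\<in>MZ. (g has_derivative (\<lambda>v. Dg v x)) (at x)" "\<forall>v. Dg v \<in> elementary_MZ"
    by blast
  then show ?case
    by (intro exI[of _ "\<lambda>v x. Df v x + Dg v x"])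
      (auto intro!: derivative_eq_intros elementary_MZ.intros)
next
  case (mult f g)
  then obtain Df Dg where
    "\<forall>x\<in>MZ. (f has_derivative (\<lambda>v. Df v x)) (at x)" "\<forall>v. Df v \<in> elementary_MZ"
    "\<forall>x\<in>MZ. (g has_derivative (\<lambda>v. Dg v x)) (at x)" "\<forall>v. Dg v \<in> elementary_MZ"
    by blast
  then show ?case
    using mult.hyps
    by (intro exI[of _ "\<lambda>v x. f x * Dg v x + Df v x * g x"])
      (auto intro!: derivative_eq_intros elementary_MZ.intros)
qed

lemma smooth_on_elementary_MZ: "f \<in> elementary_MZ \<Longrightarrow> smooth_on MZ f"
  by (rule smooth_on_derivative_closed[OF open_MZ elementary_MZ_has_derivative])

lemma cot_add_of_int_pi: "cot (x + of_int k * pi) = (cot x :: real)"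
  by (simp add: cot_altdef)

lemma cot_pi_half_minus: "cot (pi/2 - x) = (tan x :: real)"
  by (simp add: cot_def tan_def sin_diff cos_diff)

lemma cot_pi_half_minus_arctan: "cot (pi/2 - arctan s) = s"
  by (simp add: cot_pi_half_minus tan_arctan)

lemma cot_pi_half_plus_arctan: "cot (pi/2 + arctan s) = - s"
  using cot_pi_half_minus_arctan[of "- s"] by (simp add: arctan_minus)

lemma pi_half_minus_arctan_cot:
  assumes "sin p \<noteq> 0"
  obtains k :: int where "p = pi/2 - arctan (cot p) + of_int k * pi"
proof -
  obtain k :: int where "arctan (tan (pi/2 - p)) = pi/2 - p - of_int k * pi"
    using arctan_tan_eq_abs_pi[of "pi/2 - p"] assms by (auto simp: cos_diff)
  then show ?thesis
    using that[of "- k"] by (simp add: tan_cot')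
qed

definition Phi :: "pt \<Rightarrow> pt" where
  "Phi = (\<lambda>(p, th, s, t). (pi/2 + arctan s, th, t, cot p))"

definition Phi_inv :: "pt \<Rightarrow> pt" where
  "Phi_inv = (\<lambda>(p, th, s, t). (pi/2 - arctan t, th, - cot p, s))"

lemma smooth_on_MZ_tuple:
  assumes "f1 \<in> elementary_MZ" "f2 \<in> elementary_MZ" "f3 \<in> elementary_MZ" "f4 \<in> elementary_MZ"
  shows "smooth_on MZ (\<lambda>x. (f1 x, f2 x, f3 x, f4 x))"
  by (intro smooth_on_Pair open_MZ smooth_on_elementary_MZ assms)

lemma Phi_altdef:
  "Phi = (\<lambda>x. (pi/2 + arctan (fst (snd (snd x))), fst (snd x), snd (snd (snd x)),
    cos (fst x) * inverse (sin (fst x))))"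
  unfolding Phi_def cot_def divide_inverse case_prod_beta ..

lemma smooth_on_Phi: "smooth_on MZ Phi"
  unfolding Phi_altdef by (intro smooth_on_MZ_tuple elementary_MZ.intros)

lemma smooth_on_Phi_inv: "smooth_on MZ Phi_inv"
proof -
  \<comment> \<open>\<open>(-1) * _\<close> rather than \<open>- _\<close>, to match the generators of elementary_MZ\<close>
  have Phi_inv_altdef: "Phi_inv = (\<lambda>x. (pi/2 + (-1) * arctan (snd (snd (snd x))), fst (snd x),
      (-1) * cos (fst x) * inverse (sin (fst x)), fst (snd (snd x))))"
    unfolding Phi_inv_def cot_def divide_inverse case_prod_beta by simp
  show ?thesis
    unfolding Phi_inv_altdef by (intro smooth_on_MZ_tuple elementary_MZ.intros)
qed

lemma image_Phi_MZ: "Phi ` MZ \<subseteq> MZ"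
  by (auto simp: MZ_def Phi_def sin_add)

lemma image_Phi_inv_MZ: "Phi_inv ` MZ \<subseteq> MZ"
  by (auto simp: MZ_def Phi_inv_def sin_diff)

lemma same_pt_Phi: "same_pt x y \<Longrightarrow> same_pt (Phi x) (Phi y)"
  by (cases x, cases y) (auto simp: same_pt_def Phi_def cot_add_of_int_pi intro: exI[of _ 0])

lemma same_pt_Phi_inv: "same_pt x y \<Longrightarrow> same_pt (Phi_inv x) (Phi_inv y)"
  by (cases x, cases y) (auto simp: same_pt_def Phi_inv_def cot_add_of_int_pi intro: exI[of _ 0])

lemma same_pt_add_of_int_pi: "same_pt (p, th, s, t) (p + of_int k * pi, th, s, t)"
  by (auto simp: same_pt_def)

lemma same_pt_Phi_inv_Phi: "x \<in> MZ \<Longrightarrow> same_pt (Phi_inv (Phi x)) x"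
proof (cases x)
  case (fields p th s t)
  assume "x \<in> MZ"
  then obtain k :: int where k: "p = pi/2 - arctan (cot p) + of_int k * pi"
    using pi_half_minus_arctan_cot fields by (auto simp: MZ_def)
  have "Phi_inv (Phi x) = (pi/2 - arctan (cot p), th, s, t)"
    by (simp add: fields Phi_def Phi_inv_def cot_pi_half_plus_arctan)
  then show ?thesis
    using same_pt_add_of_int_pi[of "pi/2 - arctan (cot p)" th s t k] k fields by metis
qed

lemma same_pt_Phi_Phi_inv: "x \<in> MZ \<Longrightarrow> same_pt (Phi (Phi_inv x)) x"
proof (cases x)
  case (fields p th s t)
  assume "x \<in> MZ"
  then obtain k :: int where k: "p = pi/2 - arctan (cot p) + of_int k * pi"
    using pi_half_minus_arctan_cot fields by (auto simp: MZ_def)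
  have "Phi (Phi_inv x) = (pi/2 - arctan (cot p), th, s, t)"
    by (simp add: fields Phi_def Phi_inv_def cot_pi_half_minus_arctan arctan_minus)
  then show ?thesis
    using same_pt_add_of_int_pi[of "pi/2 - arctan (cot p)" th s t k] k fields by metis
qed

lemma Phi_has_derivative:
  assumes "sin p \<noteq> 0"
  shows "(Phi has_derivative (\<lambda>(dp, dth, ds, dt). (ds / (1 + s\<^sup>2), dth, dt, - dp / (sin p)\<^sup>2)))
    (at (p, th, s, t))"
proof -
  have pythagoras: "cos p * cos p + sin p * sin p = 1"
    using sin_cos_squared_add3[of p] by linarith
  show ?thesis
    unfolding Phi_altdef using assms
    by (auto intro!: derivative_eq_intros ext simp: divide_simps power2_eq_square add_pos_nonneg)
      (simp add: algebra_simps, simp add: pythagoras flip: distrib_left)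
qed

lemma divide_sin_pi_half_plus_arctan_squared: "y / (sin (pi/2 + arctan s))\<^sup>2 = (1 + s\<^sup>2) * y"
  by (simp add: sin_add cos_arctan power_divide)

lemma omega2_Phi_pullback:
  assumes "x \<in> MZ"
  shows "omega2 (Phi x) (frechet_derivative Phi (at x) v) (frechet_derivative Phi (at x) w)
    = omega1 x v w"
proof (cases x)
  case (fields p th s t)
  with assms have "sin p \<noteq> 0" by (simp add: MZ_def)
  then have D: "frechet_derivative Phi (at (p, th, s, t))
      = (\<lambda>(dp, dth, ds, dt). (ds / (1 + s\<^sup>2), dth, dt, - dp / (sin p)\<^sup>2))"
    by (rule frechet_derivative_at[OF Phi_has_derivative, symmetric])
  have "1 + s\<^sup>2 \<noteq> 0" using zero_le_power2[of s] by linarith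
  with \<open>sin p \<noteq> 0\<close> show ?thesis
    unfolding fields D
    by (cases v, cases w)
      (simp add: Phi_def omega1_def omega2_def divide_sin_pi_half_plus_arctan_squared,
        simp add: diff_divide_distrib right_diff_distrib)
qed

theorem lemmaA2:
  shows "symplectomorphic_MZ omega1 omega2"
  unfolding symplectomorphic_MZ_def
proof (intro exI conjI ballI allI impI)
  show "smooth_on MZ Phi" "smooth_on MZ Phi_inv"
    by (fact smooth_on_Phi smooth_on_Phi_inv)+
  show "Phi ` MZ \<subseteq> MZ" "Phi_inv ` MZ \<subseteq> MZ"
    by (fact image_Phi_MZ image_Phi_inv_MZ)+
  fix x y assume "same_pt x y"
  then show "same_pt (Phi x) (Phi y)" "same_pt (Phi_inv x) (Phi_inv y)"
    by (fact same_pt_Phi same_pt_Phi_inv)+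
next
  fix x v w assume "x \<in> MZ"
  then show "same_pt (Phi_inv (Phi x)) x" "same_pt (Phi (Phi_inv x)) x"
    and "omega2 (Phi x) (frechet_derivative Phi (at x) v) (frechet_derivative Phi (at x) w)
      = omega1 x v w"
    by (fact same_pt_Phi_inv_Phi same_pt_Phi_Phi_inv omega2_Phi_pullback)+
qed

end
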